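(* Let $\mathbf p$ be a strict–weak assignment and $\lambda/\mu$ a skew shape. There exists a labeling $\theta_{\mathbf p}:\lambda/\mu\to\mathbb P$ (an injection) such that a cover $s\lessdot t$ of $\lambda/\mu$ is a descent of $\theta_{\mathbf p}$ if and only if $O_{\mathbf p}(s\lessdot t)=\mathrm{strict}$. Consequently $s^{\mathbf p}_{\lambda/\mu}=K_{\lambda/\mu,\theta_{\mathbf p}}$.
   Context: A strict–weak assignment is $\mathbf p=(p_i)_{i\in\mathbb Z}$, $p_i\in\{\mathrm{weak},\mathrm{strict}\}$, with $\overline{\mathrm{weak}}=\mathrm{strict}$ and vice versa. The poset $\mathbb N^2$ (cell $(i,j)$ in row $i$, column $j$) has covers $(i,j)\gtrdot(i-1,j)$ and $(i,j)\gtrdot(i,j-1)$; set $O_{\mathbf p}((i,j)\gtrdot(i-1,j))=\overline{p_{j-i+1}}$ and $O_{\mathbf p}((i,j)\gtrdot(i,j-1))=p_{j-i}$. A skew shape $\lambda/\mu=\{(i,j):\mu_i<j\le\lambda_i\}$ for partitions $\mu\subseteq\lambda$ is viewed as an induced subposet of $\mathbb N^2$. A wave $\mathbf p$-tableau of shape $\lambda/\mu$ is $T:\lambda/\mu\to\mathbb P$ with $T(s)<T(t)$ for covers $s\lessdot t$ labeled strict and $T(s)\le T(t)$ for covers labeled weak; $s^{\mathbf p}_{\lambda/\mu}=\sum_T\prod_ix_i^{\#T^{-1}(i)}$. For a labeling (injection) $\theta:P\to\mathbb P$ of a finite poset, a cover $s\lessdot t$ is a descent if $\theta(s)>\theta(t)$;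 a $(P,\theta)$-partition is $\sigma:P\to\mathbb P$ with $\sigma(s)\le\sigma(t)$ on non-descent covers and $\sigma(s)<\sigma(t)$ on descent covers; $K_{P,\theta}=\sum_\sigma\prod_i x_i^{\#\sigma^{-1}(i)}$. *)

theory Defs
  imports Main
begin

datatype sw = Weak | Strict

fun swbar :: "sw \<Rightarrow> sw" where
  "swbar Weak = Strict" | "swbar Strict = Weak"

text \<open>Cells of N^2 are pairs (row, column); rows and columns start at 1.
  The order of N^2 is the componentwise order (generated by the covers
  (i,j) covers (i-1,j) and (i,j) covers (i,j-1)).\<close>

definition cell_le :: "nat \<times> nat \<Rightarrow> nat \<times> nat \<Rightarrow> bool" where
  "cell_le s t \<longleftrightarrow> fst s \<le> fst t \<and> snd s \<le> snd t"

definition cell_lt :: "nat \<times> nat \<Rightarrow> nat \<times> nat \<Rightarrow> bool" where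
  "cell_lt s t \<longleftrightarrow> cell_le s t \<and> s \<noteq> t"

definition covers_in :: "(nat \<times> nat) set \<Rightarrow> nat \<times> nat \<Rightarrow> nat \<times> nat \<Rightarrow> bool" where
  "covers_in P s t \<longleftrightarrow> s \<in> P \<and> t \<in> P \<and> cell_lt s t \<and>
      \<not> (\<exists>u\<in>P. cell_lt s u \<and> cell_lt u t)"

text \<open>A partition: weakly decreasing sequence lambda_1 \<ge> lambda_2 \<ge> ...,
  indexed by positive integers, with finitely many nonzero parts
  (the value at index 0 is irrelevant).\<close>
definition is_partition :: "(nat \<Rightarrow> nat) \<Rightarrow> bool" where
  "is_partition la \<longleftrightarrow> (\<forall>i\<ge>1. la (Suc i) \<le> la i) \<and> finite {i. i \<ge> 1 \<and> la i \<noteq> 0}"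

definition skew_shape :: "(nat \<Rightarrow> nat) \<Rightarrow> (nat \<Rightarrow> nat) \<Rightarrow> (nat \<times> nat) set" where
  "skew_shape la mu = {(i, j). i \<ge> 1 \<and> mu i < j \<and> j \<le> la i}"

definition O_p :: "(int \<Rightarrow> sw) \<Rightarrow> nat \<times> nat \<Rightarrow> nat \<times> nat \<Rightarrow> sw" where
  "O_p p s t = (let i = int (fst t); j = int (snd t) in
     if fst s + 1 = fst t \<and> snd s = snd t then swbar (p (j - i + 1))
     else if fst s = fst t \<and> snd s + 1 = snd t then p (j - i)
     else undefined)"

definition wave_tableau :: "(int \<Rightarrow> sw) \<Rightarrow> (nat \<times> nat) set \<Rightarrow> (nat \<times> nat \<Rightarrow> nat) \<Rightarrow> bool" where
  "wave_tableau p P T \<longleftrightarrow> (\<forall>s\<in>P. T s \<ge> 1) \<and> (\<forall>s. s \<notin> P \<longrightarrow> T s = 0) \<and>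
     (\<forall>s t. covers_in P s t \<longrightarrow>
        (if O_p p s t = Strict then T s < T t else T s \<le> T t))"

definition labeling :: "(nat \<times> nat) set \<Rightarrow> (nat \<times> nat \<Rightarrow> nat) \<Rightarrow> bool" where
  "labeling P th \<longleftrightarrow> inj_on th P \<and> (\<forall>s\<in>P. th s \<ge> 1)"

definition is_descent :: "(nat \<times> nat \<Rightarrow> nat) \<Rightarrow> nat \<times> nat \<Rightarrow> nat \<times> nat \<Rightarrow> bool" where
  "is_descent th s t \<longleftrightarrow> th s > th t"

definition P_partition :: "(nat \<times> nat) set \<Rightarrow> (nat \<times> nat \<Rightarrow> nat) \<Rightarrow> (nat \<times> nat \<Rightarrow> nat) \<Rightarrow> bool" where
  "P_partition P th \<sigma> \<longleftrightarrow> (\<forall>s\<in>P. \<sigma> s \<ge> 1) \<and> (\<forall>s. s \<notin> P \<longrightarrow> \<sigma> s = 0) \<and>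
     (\<forall>s t. covers_in P s t \<longrightarrow>
        (if is_descent th s t then \<sigma> s < \<sigma> t else \<sigma> s \<le> \<sigma> t))"

text \<open>Exponent vector of the monomial prod_i x_i^{#T^{-1}(i)}.\<close>
definition content :: "(nat \<times> nat) set \<Rightarrow> (nat \<times> nat \<Rightarrow> nat) \<Rightarrow> nat \<Rightarrow> nat" where
  "content P T = (\<lambda>k. card {s\<in>P. T s = k})"

text \<open>Equality of the generating functions s^p and K_{P,theta}, coefficientwise.\<close>
definition wave_coeff :: "(int \<Rightarrow> sw) \<Rightarrow> (nat \<times> nat) set \<Rightarrow> (nat \<Rightarrow> nat) \<Rightarrow> nat" where
  "wave_coeff p P a = card {T. wave_tableau p P T \<and> content P T = a}"

definition K_coeff :: "(nat \<times> nat) set \<Rightarrow> (nat \<times> nat \<Rightarrow> nat) \<Rightarrow> (nat \<Rightarrow> nat) \<Rightarrow> nat" where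
  "K_coeff P th a = card {\<sigma>. P_partition P th \<sigma> \<and> content P \<sigma> = a}"

end

theory Submission
  imports Defs "HOL-Library.Product_Lexorder"
begin

text \<open>Give the diagonal of content \<open>d = j - i\<close> a height \<open>h d\<close>, normalised by \<open>h 0 = 0\<close>, with
  \<open>h (d + 1) = h d - 1\<close> if \<open>p (d + 1)\<close> is strict and \<open>h (d + 1) = h d + 1\<close> if it is weak.
  Label the cells of \<open>\<lambda>/\<mu>\<close> by their rank in the lexicographic order of (height of the
  diagonal, row, column). A horizontal cover of \<open>\<lambda>/\<mu>\<close> climbs from diagonal \<open>d\<close> to \<open>d + 1\<close>
  and a vertical cover descends from \<open>d + 1\<close> to \<open>d\<close>; since \<open>\<lambda>/\<mu>\<close> is convex these are all
  covers, and in both cases the label decreases exactly when the cover is strict.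
  Descents determine the \<open>(P,\<theta>)\<close>-partitions, so these are exactly the wave tableaux.\<close>

fun step_sign :: "sw \<Rightarrow> int" where
  "step_sign Strict = -1" | "step_sign Weak = 1"

definition diag_height :: "(int \<Rightarrow> sw) \<Rightarrow> int \<Rightarrow> int" where
  "diag_height p d = (\<Sum>k\<in>{1..d}. step_sign (p k)) - (\<Sum>k\<in>{d+1..0}. step_sign (p k))"

lemma diag_height_succ: "diag_height p (d + 1) = diag_height p d + step_sign (p (d + 1))"
proof (cases "d \<ge> 0")
  case True
  then have "{1..d+1} = insert (d+1) {1..d}" "{d+1+1..0} = {}" "{d+1..0} = {}" by auto
  then show ?thesis unfolding diag_height_def by simp
next
  case False
  then have "{1..d+1} = {}" "{1..d} = {}" "{d+1..0} = insert (d+1) {d+1+1..0}" by auto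
  then show ?thesis unfolding diag_height_def by simp
qed

definition wave_key :: "(int \<Rightarrow> sw) \<Rightarrow> nat \<times> nat \<Rightarrow> int \<times> nat \<times> nat" where
  "wave_key p s = (diag_height p (int (snd s) - int (fst s)), fst s, snd s)"

lemma inj_wave_key: "inj (wave_key p)"
  by (rule injI) (auto simp: wave_key_def prod_eq_iff)

lemma wave_key_less_iff_strict:
  assumes "(c = a + 1 \<and> e = b) \<or> (c = a \<and> e = b + 1)"
  shows "wave_key p (c, e) < wave_key p (a, b) \<longleftrightarrow> O_p p (a, b) (c, e) = Strict"
  using assms
proof
  assume vertical: "c = a + 1 \<and> e = b"
  then have "int b - int a = (int e - int c) + 1" by simp
  then have "diag_height p (int b - int a)
      = diag_height p (int e - int c) + step_sign (p (int e - int c + 1))"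
    by (simp add: diag_height_succ)
  moreover have "O_p p (a, b) (c, e) = swbar (p (int e - int c + 1))"
    using vertical by (simp add: O_p_def Let_def)
  ultimately show ?thesis
    using vertical by (cases "p (int e - int c + 1)") (auto simp: wave_key_def)
next
  assume horizontal: "c = a \<and> e = b + 1"
  then have "int e - int c = (int b - int a) + 1" by simp
  then have "diag_height p (int e - int c)
      = diag_height p (int b - int a) + step_sign (p (int e - int c))"
    by (simp add: diag_height_succ)
  moreover have "O_p p (a, b) (c, e) = p (int e - int c)"
    using horizontal by (simp add: O_p_def Let_def)
  ultimately show ?thesis
    using horizontal by (cases "p (int e - int c)") (auto simp: wave_key_def)
qed

definition rank_label :: "'a set \<Rightarrow> ('a \<Rightarrow> 'b::linorder) \<Rightarrow> 'a \<Rightarrow> nat" where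
  "rank_label A f x = card {y\<in>A. f y < f x} + 1"

lemma rank_label_strict_mono:
  assumes "finite A" "x \<in> A" "f x < f y"
  shows "rank_label A f x < rank_label A f y"
proof -
  have "{z\<in>A. f z < f x} \<subset> {z\<in>A. f z < f y}"
    using assms by auto
  then show ?thesis
    unfolding rank_label_def using assms(1) by (simp add: psubset_card_mono)
qed

lemma rank_label_less_iff:
  assumes "finite A" "inj_on f A" "x \<in> A" "y \<in> A"
  shows "rank_label A f x < rank_label A f y \<longleftrightarrow> f x < f y"
  using rank_label_strict_mono[OF assms(1,3), of f y] rank_label_strict_mono[OF assms(1,4), of f x]
    inj_onD[OF assms(2) _ assms(3,4)]
  by (metis less_irrefl not_less_iff_gr_or_eq)

lemma labeling_rank_label:
  assumes "finite A" "inj_on f A"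
  shows "labeling A (rank_label A f)"
proof -
  have "inj_on (rank_label A f) A"
    by (rule inj_onI) (metis assms rank_label_less_iff inj_onD less_irrefl not_less_iff_gr_or_eq)
  then show ?thesis
    unfolding labeling_def rank_label_def by simp
qed

lemma is_partition_antimono:
  assumes "is_partition la" "1 \<le> i" "i \<le> k"
  shows "la k \<le> la i"
  using assms(3)
proof (induction k rule: dec_induct)
  case (step n)
  then show ?case
    using assms(1,2) unfolding is_partition_def by (meson le_trans order.trans)
qed simp

lemma finite_skew_shape:
  assumes "is_partition la"
  shows "finite (skew_shape la mu)"
proof -
  obtain B where B: "\<And>i. 1 \<le> i \<Longrightarrow> la i \<noteq> 0 \<Longrightarrow> i \<le> B"
    using assms unfolding is_partition_def finite_nat_set_iff_bounded_le by blast
  have "skew_shape la mu \<subseteq> {0..B} \<times> {0..la 1}"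
    using B is_partition_antimono[OF assms, of 1] by (fastforce simp: skew_shape_def)
  then show ?thesis
    by (rule finite_subset) simp
qed

definition cell_convex :: "(nat \<times> nat) set \<Rightarrow> bool" where
  "cell_convex P \<longleftrightarrow> (\<forall>s\<in>P. \<forall>t\<in>P. \<forall>u. cell_le s u \<and> cell_le u t \<longrightarrow> u \<in> P)"

lemma cell_convex_skew_shape:
  assumes "is_partition la" "is_partition mu"
  shows "cell_convex (skew_shape la mu)"
  unfolding cell_convex_def
proof (intro ballI allI impI)
  fix s t u
  assume "s \<in> skew_shape la mu" "t \<in> skew_shape la mu" "cell_le s u \<and> cell_le u t"
  then show "u \<in> skew_shape la mu"
    using is_partition_antimono[OF assms(1), of "fst u" "fst t"]
      is_partition_antimono[OF assms(2), of "fst s" "fst u"]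
    by (auto simp: skew_shape_def cell_le_def)
qed

lemma covers_in_cell_convex:
  assumes "cell_convex P" "covers_in P (a, b) (c, e)"
  shows "(c = a + 1 \<and> e = b) \<or> (c = a \<and> e = b + 1)"
proof (rule ccontr)
  assume not_adjacent: "\<not> ?thesis"
  have ends: "(a, b) \<in> P" "(c, e) \<in> P" and lt: "a \<le> c" "b \<le> e" "(a, b) \<noteq> (c, e)"
    using assms(2) by (auto simp: covers_in_def cell_lt_def cell_le_def)
  text \<open>Otherwise a unit step in one coordinate from \<open>(a, b)\<close> stays strictly below \<open>(c, e)\<close>.\<close>
  define u where "u = (if a < c then (a + 1, b) else (a, b + 1))"
  have "cell_lt (a, b) u" "cell_lt u (c, e)"
    using lt not_adjacent by (auto simp: u_def cell_lt_def cell_le_def)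
  moreover from this have "u \<in> P"
    using assms(1) ends unfolding cell_convex_def cell_lt_def by blast
  ultimately show False
    using assms(2) unfolding covers_in_def by blast
qed

lemma wave_coeff_eq_K_coeff:
  assumes "\<forall>s t. covers_in P s t \<longrightarrow> (is_descent th s t \<longleftrightarrow> O_p p s t = Strict)"
  shows "wave_coeff p P a = K_coeff P th a"
proof -
  have "wave_tableau p P T \<longleftrightarrow> P_partition P th T" for T
    using assms unfolding wave_tableau_def P_partition_def by auto
  then show ?thesis
    unfolding wave_coeff_def K_coeff_def by simp
qed

theorem proposition6p2:
  fixes p :: "int \<Rightarrow> sw" and la mu :: "nat \<Rightarrow> nat"
  assumes "is_partition la" and "is_partition mu" and "\<forall>i. mu i \<le> la i"
  shows "\<exists>th. labeling (skew_shape la mu) th \<and>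
           (\<forall>s t. covers_in (skew_shape la mu) s t \<longrightarrow>
              (is_descent th s t \<longleftrightarrow> O_p p s t = Strict)) \<and>
           (\<forall>a. wave_coeff p (skew_shape la mu) a = K_coeff (skew_shape la mu) th a)"
proof -
  let ?P = "skew_shape la mu"
  let ?th = "rank_label ?P (wave_key p)"
  have fin: "finite ?P" and inj: "inj_on (wave_key p) ?P"
    using finite_skew_shape[OF assms(1)] inj_wave_key by (auto intro: inj_on_subset)
  have descents: "is_descent ?th s t \<longleftrightarrow> O_p p s t = Strict" if "covers_in ?P s t" for s t
  proof -
    obtain a b c e where st: "s = (a, b)" "t = (c, e)" by fastforce
    have "t \<in> ?P" "s \<in> ?P" using that by (simp_all add: covers_in_def)
    then have "is_descent ?th s t \<longleftrightarrow> wave_key p t < wave_key p s"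
      unfolding is_descent_def by (rule rank_label_less_iff[OF fin inj])
    also have "\<dots> \<longleftrightarrow> O_p p s t = Strict"
      using covers_in_cell_convex[OF cell_convex_skew_shape[OF assms(1,2)]] that
      unfolding st by (intro wave_key_less_iff_strict)
    finally show ?thesis .
  qed
  then show ?thesis
    using labeling_rank_label[OF fin inj] wave_coeff_eq_K_coeff by blast
qed

end
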